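(* Let $(G,c)$ be a $k$-terminal network whose minimum $S$-separating cuts are unique for all $S\subset Q$, $S\neq\emptyset,Q$, so that $\Delta_{G,c}>0$. Let $A_G=A_{G,c}\in\{0,1\}^{m\times E(G)}$ be its cutset-edge incidence matrix, let $r=\mathrm{rank}(A_G)\ge1$, and fix any matrix $A\in\{0,1\}^{m\times(r-1)}$ with column span $W_A\subseteq\mathbb{R}^m$. Let $w\in\mathbb{R}^{E(G)}$ be random with independent coordinates $w(e)$, each uniformly distributed on $[0,\frac{1}{\Delta_{G,c}|E(G)|}]$, and let $\vec c\in\mathbb{R}^{E(G)}$ be the vector of costs $c$. Then $$\Pr_w\big[A_G(\vec c+\vec w)\in W_A\big]=0.$$
   Context: For $S\subset Q$, $\bar S=Q\setminus S$; a cut $(W,V(G)\setminus W)$ is $S$-separating if $W\cap Q\in\{S,\bar S\}$; its cost is the total cost of its cutset (edges with exactly one endpoint in $W$). $\Delta_{G,c}(S)\ge0$ is the difference between the two smallest costs among all $S$-separating cuts, and $\Delta_{G,c}=\min_S\Delta_{G,c}(S)$. Cutset-edge incidence matrix: fix an enumeration $S_1,\dots,S_m$, $m=2^{k-1}-1$, of representatives of the distinct nontrivial bipartitions $Q=S_i\cup\bar S_i$, and for each $i$ a minimum-cost $S_i$-separating cut; $(A_{G,c})_{i,e}=1$ iff $e$ lies in that cut's cutset, else $0$. *)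

theory Defs
  imports "HOL-Probability.Probability" "Jordan_Normal_Form.DL_Rank"
begin

definition k_terminal_network ::
  "'v set \<Rightarrow> 'v set set \<Rightarrow> 'v set \<Rightarrow> nat \<Rightarrow> ('v set \<Rightarrow> real) \<Rightarrow> bool" where
  "k_terminal_network V E Q k c \<longleftrightarrow>
     finite V \<and> (\<forall>e\<in>E. e \<subseteq> V \<and> card e = 2) \<and> Q \<subseteq> V \<and> card Q = k \<and>
     (\<forall>e\<in>E. c e > 0)"

definition cutset :: "'v set set \<Rightarrow> 'v set \<Rightarrow> 'v set set" where
  "cutset E W = {e \<in> E. card (e \<inter> W) = 1}"

definition cut_cost :: "'v set set \<Rightarrow> ('v set \<Rightarrow> real) \<Rightarrow> 'v set \<Rightarrow> real" where
  "cut_cost E c W = (\<Sum>e\<in>cutset E W. c e)"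

definition nontrivial_terminal_set :: "'v set \<Rightarrow> 'v set \<Rightarrow> bool" where
  "nontrivial_terminal_set Q S \<longleftrightarrow> S \<subseteq> Q \<and> S \<noteq> {} \<and> S \<noteq> Q"

definition separating :: "'v set \<Rightarrow> 'v set \<Rightarrow> 'v set \<Rightarrow> 'v set \<Rightarrow> bool" where
  "separating V Q S W \<longleftrightarrow> W \<subseteq> V \<and> (W \<inter> Q = S \<or> W \<inter> Q = Q - S)"

definition min_separating ::
  "'v set \<Rightarrow> 'v set set \<Rightarrow> 'v set \<Rightarrow> ('v set \<Rightarrow> real) \<Rightarrow> 'v set \<Rightarrow> 'v set \<Rightarrow> bool" where
  "min_separating V E Q c S W \<longleftrightarrow> separating V Q S W \<and>
     (\<forall>W'. separating V Q S W' \<longrightarrow> cut_cost E c W \<le> cut_cost E c W')"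

text \<open>Uniqueness of the minimum S-separating cut; the cuts (W, V-W) and (V-W, W) are the same cut.\<close>
definition unique_min_cut ::
  "'v set \<Rightarrow> 'v set set \<Rightarrow> 'v set \<Rightarrow> ('v set \<Rightarrow> real) \<Rightarrow> 'v set \<Rightarrow> bool" where
  "unique_min_cut V E Q c S \<longleftrightarrow>
     (\<exists>W. min_separating V E Q c S W \<and>
        (\<forall>W'. min_separating V E Q c S W' \<longrightarrow> W' = W \<or> W' = V - W))"

definition Delta_S ::
  "'v set \<Rightarrow> 'v set set \<Rightarrow> 'v set \<Rightarrow> ('v set \<Rightarrow> real) \<Rightarrow> 'v set \<Rightarrow> real" where
  "Delta_S V E Q c S = Min {cut_cost E c W2 - cut_cost E c W1 | W1 W2.
      min_separating V E Q c S W1 \<and> separating V Q S W2 \<and> W2 \<noteq> W1 \<and> W2 \<noteq> V - W1}"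

definition Delta :: "'v set \<Rightarrow> 'v set set \<Rightarrow> 'v set \<Rightarrow> ('v set \<Rightarrow> real) \<Rightarrow> real" where
  "Delta V E Q c = Min {Delta_S V E Q c S | S. nontrivial_terminal_set Q S}"

text \<open>Cutset-edge incidence matrix: rows indexed by i < m (bipartition S i, chosen minimum
  cut W i), columns by the edges in the enumeration es of E.\<close>
definition cutset_matrix :: "'v set set \<Rightarrow> nat \<Rightarrow> (nat \<Rightarrow> 'v set) \<Rightarrow> 'v set list \<Rightarrow> real mat" where
  "cutset_matrix E m Wf es =
     Matrix.mat m (length es) (\<lambda>(i, j). if es ! j \<in> cutset E (Wf i) then 1 else 0)"

end

theory Submission
  imports Defs "Jordan_Normal_Form.Gram_Schmidt"
begin

(* Hence some column of A_G lies outside W_A, and the residual of that column after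
   orthogonal projection onto W_A is a vector y orthogonal to W_A with
   u := y^T A_G having a nonzero entry u(e0).  Whenever A_G (c + w) lies in W_A, we get
   u . (c + w) = y . A_G (c + w) = 0, so the event is contained in an affine hyperplane
   of R^E that is not parallel to the e0-axis.  Such a hyperplane is a null set for every
   product of atomless sigma-finite measures (Fubini: each e0-section is a single point). *)

section \<open>Linear algebra\<close>

context cof_vec_space
begin

text \<open>Every finite list of vectors spans the same subspace as some pairwise orthogonal list;
  the library's Gram-Schmidt theorem needs linearly independent input, this version does not.\<close>
lemma orthogonal_spanning_list:
  assumes "set ws \<subseteq> carrier_vec n"
  shows "\<exists>qs. set qs \<subseteq> carrier_vec n \<and> corthogonal qs \<and> span (set qs) = span (set ws)"
  using assms
proof (induct ws)
  case Nil
  then show ?case by (intro exI[of _ "[]"]) (auto simp: corthogonal_def)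
next
  case (Cons w ws)
  then obtain qs where qs: "set qs \<subseteq> carrier_vec n" "corthogonal qs" "span (set qs) = span (set ws)"
    and w: "w \<in> carrier_vec n" and ws: "set ws \<subseteq> carrier_vec n" by auto
  have dist: "distinct qs" using corthogonal_distinct qs by auto
  have span_insert: "span (set qs \<union> {w}) = span (set ws \<union> {w})"
    by (rule span_Un) (use qs w ws in auto)
  show ?case
  proof (cases "w \<in> span (set qs)")
    case True
    have "span (set qs) = span (set qs \<union> {w})" using already_in_span[OF qs(1) True] .
    then show ?thesis using qs span_insert by (intro exI[of _ qs]) auto
  next
    case False
    have "span (set ((adjuster n w qs + w) # qs)) = span (set (w # qs))"
      by (rule gram_schmidt_sub_span[OF w qs(1) dist])
    also have "set (w # qs) = set qs \<union> {w}" by auto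
    also have "span \<dots> = span (set (w # ws))" using span_insert by (simp add: Un_commute)
    finally show ?thesis using adjust_orthogonal[OF qs(1,2) w False] qs(1) w dist
      by (intro exI[of _ "(adjuster n w qs + w) # qs"]) auto
  qed
qed

lemma rank_le_of_cols_in_span:
  assumes A: "A \<in> carrier_mat n nc" and B: "B \<in> carrier_mat n nc'"
    and sub: "set (cols B) \<subseteq> span (set (cols A))"
  shows "rank B \<le> rank A"
proof -
  define W where "W = span (set (cols A))"
  have cA: "set (cols A) \<subseteq> carrier_vec n" using A cols_dim by blast
  have cB: "set (cols B) \<subseteq> carrier_vec n" using B cols_dim by blast
  have W: "subspace class_ring W V" unfolding W_def using span_is_subspace cA by auto
  have "span (set (cols B)) \<subseteq> W"
    using sub unfolding W_def by (simp add: cA span_is_submodule span_is_subset)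
  moreover have "subspace class_ring (span (set (cols B))) V" using span_is_subspace cB by auto
  ultimately have sub_W: "subspace class_ring (span (set (cols B))) (vs W)"
    using nested_subspaces[OF W] by blast
  have "vectorspace.fin_dim class_ring (vs W)" unfolding W_def using fin_dim_span_cols A by auto
  then have "rank B \<le> vectorspace.dim class_ring (vs W)" unfolding rank_def
    using vectorspace.subspace_dim[OF subspace_is_vs[OF W] sub_W] fin_dim_span_cols B by auto
  then show ?thesis unfolding rank_def W_def .
qed

lemma image_mult_mat_vec_eq_span:
  assumes A: "A \<in> carrier_mat n p"
  shows "{A *\<^sub>v x | x. x \<in> carrier_vec p} = span (set (cols A))"
proof -
  have "{A *\<^sub>v x | x. x \<in> carrier_vec p} = {y \<in> carrier_vec n. \<exists>x\<in>carrier_vec p. A *\<^sub>v x = y}"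
    using A by auto
  then show ?thesis using col_space_eq[OF A] A unfolding col_space_def by simp
qed

end

lemma scalar_prod_mult_mat_vec:
  fixes G :: "'a :: comm_ring mat" and v :: "'a vec"
  assumes y: "y \<in> carrier_vec n" and G: "G \<in> carrier_mat n N" and v: "v \<in> carrier_vec N"
  shows "scalar_prod y (G *\<^sub>v v) = (\<Sum>j<N. scalar_prod y (col G j) * v $ j)"
proof -
  have "scalar_prod y (G *\<^sub>v v) = scalar_prod y (vec n (\<lambda>i. scalar_prod (row G i) v))" using G by (auto simp: mult_mat_vec_def)
  also have "\<dots> = scalar_prod (vec N (\<lambda>j. scalar_prod y (col G j))) v" by (rule assoc_scalar_prod[OF y G v, symmetric])
  also have "\<dots> = (\<Sum>j<N. scalar_prod y (col G j) * v $ j)"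
    using v by (auto simp: scalar_prod_def atLeast0LessThan)
  finally show ?thesis .
qed

text \<open>Conjugation is trivial on real vectors, so the conjugate inner product of the
  Gram-Schmidt library is the ordinary one.\<close>
lemma conjugate_real_vec [simp]: "conjugate (v :: real vec) = v"
  by (auto simp: conjugate_vec_def)

text \<open>Real vectors of dimension n.  Orthogonal projection onto the span of an orthogonal
  list qs is given by the Gram-Schmidt adjuster: the residual of v is adjuster n v qs + v.\<close>
locale real_vec_space = cof_vec_space n "TYPE(real)" for n
begin

lemma orthogonal_to_span:
  fixes qs :: "real vec list"
  assumes qs: "set qs \<subseteq> carrier_vec n" and y: "y \<in> carrier_vec n"
    and orth: "\<forall>q\<in>set qs. scalar_prod y q = 0" and x: "x \<in> span (set qs)"
  shows "scalar_prod y x = 0"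
proof -
  have "y \<in> orthogonal_complement (set qs)" using y orth unfolding orthogonal_complement_def by auto
  then have "y \<in> orthogonal_complement (span (set qs))" using qs by simp
  then show ?thesis using x unfolding orthogonal_complement_def by auto
qed

lemma residual_orthogonal:
  fixes qs :: "real vec list"
  assumes qs: "set qs \<subseteq> carrier_vec n" "corthogonal qs" and v: "v \<in> carrier_vec n"
  shows "\<forall>q\<in>set qs. scalar_prod (adjuster n v qs + v) q = 0"
  using adjust_zero[OF qs v] by (auto simp: in_set_conv_nth)

lemma in_span_iff_residual_zero:
  fixes qs :: "real vec list"
  assumes qs: "set qs \<subseteq> carrier_vec n" "corthogonal qs" and v: "v \<in> carrier_vec n"
  shows "v \<in> span (set qs) \<longleftrightarrow> adjuster n v qs + v = 0\<^sub>v n"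
proof -
  have dist: "distinct qs" using corthogonal_distinct qs by auto
  let ?z = "adjuster n v qs + v"
  have z: "?z \<in> carrier_vec n" using adjuster_carrier[OF v qs(1) dist] v by auto
  show ?thesis
  proof
    assume "v \<in> span (set qs)"
    then have "?z \<in> span (set qs)" using adjust_preserves_span[OF v qs(1) dist] by auto
    then have "?z \<bullet>c ?z = 0" using orthogonal_to_span[OF qs(1) z residual_orthogonal[OF qs v]] by simp
    then show "?z = 0\<^sub>v n" using conjugate_square_eq_0_vec[OF z] by simp
  next
    assume "?z = 0\<^sub>v n"
    moreover have "0\<^sub>v n \<in> span (set qs)" using vectorspace.span_zero[OF vec_vs, of n "set qs"] by simp
    ultimately show "v \<in> span (set qs)" using adjust_preserves_span[OF v qs(1) dist] by auto
  qed
qed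

lemma exists_normal_vector:
  fixes G :: "real mat"
  assumes G: "G \<in> carrier_mat n N" and qs: "set qs \<subseteq> carrier_vec n" "corthogonal qs"
    and outside: "\<not> set (cols G) \<subseteq> span (set qs)"
  shows "\<exists>y j0. y \<in> carrier_vec n \<and> j0 < N \<and> (\<forall>x\<in>span (set qs). scalar_prod y x = 0)
                 \<and> scalar_prod y (col G j0) \<noteq> 0"
proof -
  have dist: "distinct qs" using corthogonal_distinct qs by auto
  have "\<exists>j<N. col G j \<notin> span (set qs)" using outside G by (auto simp: cols_def)
  then obtain j0 where j0: "j0 < N" "col G j0 \<notin> span (set qs)" by blast
  define g where "g = col G j0"
  define y where "y = adjuster n g qs + g"
  have g: "g \<in> carrier_vec n" using G j0 unfolding g_def by auto
  have adj: "adjuster n g qs \<in> carrier_vec n" using adjuster_carrier[OF g qs(1) dist] .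
  have y: "y \<in> carrier_vec n" unfolding y_def using adj g by auto
  have y_orth: "\<forall>q\<in>set qs. scalar_prod y q = 0" unfolding y_def using residual_orthogonal[OF qs g] .
  have "scalar_prod y y = scalar_prod y (adjuster n g qs) + scalar_prod y g"
    by (subst (2) y_def) (rule scalar_prod_add_distrib[OF y adj g])
  also have "scalar_prod y (adjuster n g qs) = 0"
    using orthogonal_to_span[OF qs(1) y y_orth adjuster_in_span[OF g qs(1) dist]] .
  finally have "scalar_prod y g = scalar_prod y y" by simp
  moreover have "y \<noteq> 0\<^sub>v n" unfolding y_def g_def using adjust_nonzero[OF qs(1) dist _ j0(2)] G j0 by auto
  then have "scalar_prod y y \<noteq> 0" using conjugate_square_eq_0_vec[OF y] by simp
  ultimately show ?thesis using y j0(1) orthogonal_to_span[OF qs(1) y y_orth] unfolding g_def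
    by (intro exI[of _ y] exI[of _ j0]) auto
qed

end

section \<open>Measure theory\<close>

text \<open>The uniform distribution on an interval is finite, also when the interval is
  degenerate (then it is the zero measure).\<close>
lemma finite_measure_uniform_Icc: "finite_measure (uniform_measure lborel {0..(a::real)})"
proof (rule finite_measureI)
  have "emeasure lborel {0..a} / emeasure lborel {0..a} \<noteq> \<infinity>"
  proof (cases "0 < a")
    case True
    then show ?thesis by (simp add: divide_ennreal)
  next
    case False
    then have "emeasure lborel {0..a} = 0" by (simp add: emeasure_lborel_Icc_eq)
    then show ?thesis by simp
  qed
  then show "emeasure (uniform_measure lborel {0..a}) (space (uniform_measure lborel {0..a})) \<noteq> \<infinity>"
    by simp
qed

text \<open>The uniform distribution on an interval is a sigma-finite Borel measure without atoms,
  the only properties of it the argument uses.\<close>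
lemma uniform_Icc_atomless:
  "sigma_finite_measure (uniform_measure lborel {0..(a::real)})"
  "sets (uniform_measure lborel {0..a}) = sets borel"
  "emeasure (uniform_measure lborel {0..a}) {x} = 0"
proof -
  interpret finite_measure "uniform_measure lborel {0..a}" by (rule finite_measure_uniform_Icc)
  show "sigma_finite_measure (uniform_measure lborel {0..a})" ..
  show "sets (uniform_measure lborel {0..a}) = sets borel" by simp
  have "emeasure lborel ({0..a} \<inter> {x}) = 0"
    using emeasure_mono[of "{0..a} \<inter> {x}" "{x}" lborel] by simp
  then show "emeasure (uniform_measure lborel {0..a}) {x} = 0" by simp
qed

lemma coordinate_borel_measurable:
  assumes "sets \<mu> = sets borel" and "e \<in> E"
  shows "(\<lambda>w. w e) \<in> borel_measurable (PiM E (\<lambda>_. \<mu>))"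
proof -
  have "(\<lambda>w. w e) \<in> measurable (PiM E (\<lambda>_. \<mu>)) \<mu>"
    by (rule measurable_component_singleton) (use assms in auto)
  moreover have "measurable (PiM E (\<lambda>_. \<mu>)) \<mu> = measurable (PiM E (\<lambda>_. \<mu>)) borel"
    by (rule measurable_cong_sets) (simp_all add: assms)
  ultimately show ?thesis by simp
qed

text \<open>An affine hyperplane whose normal vector has a nonzero entry at coordinate es ! j0
  is a null set for a product of atomless sigma-finite Borel measures: each section in the
  direction es ! j0 meets it in at most one point.\<close>
lemma affine_hyperplane_null:
  fixes es :: "'e list" and u :: "nat \<Rightarrow> real" and c :: "'e \<Rightarrow> real"
  assumes \<mu>: "sigma_finite_measure \<mu>" "sets \<mu> = sets borel" "\<And>x. emeasure \<mu> {x} = 0"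
    and es: "distinct es" "set es = E" and j0: "j0 < length es" and u0: "u j0 \<noteq> 0"
  shows "{w \<in> space (PiM E (\<lambda>_. \<mu>)). (\<Sum>j<length es. u j * (c (es ! j) + w (es ! j))) = 0}
         \<in> null_sets (PiM E (\<lambda>_. \<mu>))"
    (is "?H \<in> null_sets ?P")
proof -
  interpret product_sigma_finite "\<lambda>_. \<mu>"
    unfolding product_sigma_finite_def using \<mu>(1) by simp
  have [measurable]: "(\<lambda>w. w (es ! j)) \<in> borel_measurable ?P" if "j < length es" for j
    by (rule coordinate_borel_measurable[OF \<mu>(2)]) (use es that in auto)
  have H: "?H \<in> sets ?P" by measurable
  define e0 where "e0 = es ! j0"
  define I where "I = E - {e0}"
  have E: "E = insert e0 I" "e0 \<notin> I" "finite I" using es j0 unfolding I_def e0_def by auto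
  define y0 where "y0 x = - (\<Sum>j\<in>{..<length es} - {j0}. u j * (c (es ! j) + x (es ! j))) / u j0 - c e0"
    for x :: "'e \<Rightarrow> real"
  have section_in_point: "indicator ?H (x(e0 := t)) \<le> (indicator {y0 x} t :: ennreal)" for x t
  proof (cases "x(e0 := t) \<in> ?H")
    case True
    have other: "(x(e0 := t)) (es ! j) = x (es ! j)" if "j \<in> {..<length es} - {j0}" for j
      using that es(1) j0 by (auto simp: e0_def nth_eq_iff_index_eq)
    have "(\<Sum>j<length es. u j * (c (es ! j) + (x(e0 := t)) (es ! j)))
        = u j0 * (c e0 + t) + (\<Sum>j\<in>{..<length es} - {j0}. u j * (c (es ! j) + x (es ! j)))"
      using j0 other by (simp add: sum.remove[of _ j0] e0_def)
    with True have "t = y0 x" unfolding y0_def using u0 by (simp add: field_simps)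
    then show ?thesis by (simp add: indicator_def)
  qed simp
  have section_null: "(\<integral>\<^sup>+ t. indicator ?H (x(e0 := t)) \<partial>\<mu>) = 0" for x
  proof -
    have "(\<integral>\<^sup>+ t. indicator ?H (x(e0 := t)) \<partial>\<mu>) \<le> (\<integral>\<^sup>+ t. indicator {y0 x} t \<partial>\<mu>)"
      by (rule nn_integral_mono) (rule section_in_point)
    also have "\<dots> = 0" using \<mu>(2,3) by simp
    finally show ?thesis by simp
  qed
  have "emeasure ?P ?H = (\<integral>\<^sup>+ x. (\<integral>\<^sup>+ t. indicator ?H (x(e0 := t)) \<partial>\<mu>) \<partial>(PiM I (\<lambda>_. \<mu>)))"
    using product_nn_integral_insert[OF E(3,2), of "indicator ?H"] H by (simp add: E(1)[symmetric])
  also have "\<dots> = 0" by (simp add: section_null)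
  finally show ?thesis using H by (simp add: null_sets_def)
qed

lemma dim_adjuster [simp]: "dim_vec (adjuster n w us) = n"
  by (induct us) auto

lemma adjuster_borel_measurable:
  fixes g :: "'x \<Rightarrow> real vec"
  assumes qs: "set qs \<subseteq> carrier_vec n"
    and g: "\<And>k. k < n \<Longrightarrow> (\<lambda>w. g w $ k) \<in> borel_measurable M" and i: "i < n"
  shows "(\<lambda>w. adjuster n (g w) qs $ i) \<in> borel_measurable M"
  using qs
proof (induct qs)
  case Nil
  then show ?case using i by simp
next
  case (Cons q qs)
  then have q: "q \<in> carrier_vec n" and IH: "(\<lambda>w. adjuster n (g w) qs $ i) \<in> borel_measurable M"
    by auto
  have "adjuster n (g w) (q # qs) $ i
     = - (\<Sum>k\<in>{0..<n}. g w $ k * q $ k) / (\<Sum>k\<in>{0..<n}. q $ k * q $ k) * q $ i + adjuster n (g w) qs $ i"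
    for w using q i by (simp add: scalar_prod_def)
  then show ?case using IH g by simp measurable
qed

text \<open>The preimage of a linear subspace under a measurable vector-valued map is measurable;
  the subspace is described as the zero set of the residual map.\<close>
lemma (in real_vec_space) span_preimage_measurable:
  fixes g :: "'x \<Rightarrow> real vec" and qs :: "real vec list"
  assumes qs: "set qs \<subseteq> carrier_vec n" "corthogonal qs"
    and g: "\<And>w. g w \<in> carrier_vec n" and g_meas: "\<And>k. k < n \<Longrightarrow> (\<lambda>w. g w $ k) \<in> borel_measurable M"
  shows "{w \<in> space M. g w \<in> span (set qs)} \<in> sets M"
proof -
  have "g w \<in> span (set qs) \<longleftrightarrow> (\<forall>i\<in>{..<n}. adjuster n (g w) qs $ i + g w $ i = 0)" for w
    using in_span_iff_residual_zero[OF qs g[of w]] g[of w]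
    by (auto simp: vec_eq_iff)
  moreover have "(\<lambda>w. adjuster n (g w) qs $ i + g w $ i) \<in> borel_measurable M" if "i < n" for i
    using adjuster_borel_measurable[OF qs(1) g_meas that] g_meas[OF that] by measurable
  ultimately show ?thesis by simp
qed

lemma column_space_event_null:
  fixes G A :: "real mat" and es :: "'e list" and c :: "'e \<Rightarrow> real"
  assumes G: "G \<in> carrier_mat n N" and A: "A \<in> carrier_mat n p"
    and rank_lt: "vec_space.rank n A < vec_space.rank n G"
    and es: "distinct es" "set es = E" "length es = N"
    and \<mu>: "sigma_finite_measure \<mu>" "sets \<mu> = sets borel" "\<And>x. emeasure \<mu> {x} = 0"
  shows "{w \<in> space (PiM E (\<lambda>_. \<mu>)). G *\<^sub>v vec N (\<lambda>j. c (es ! j) + w (es ! j))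
            \<in> {A *\<^sub>v x | x. x \<in> carrier_vec p}} \<in> null_sets (PiM E (\<lambda>_. \<mu>))"
proof -
  interpret real_vec_space n .
  define P where "P = PiM E (\<lambda>_. \<mu>)"
  define v where "v w = vec N (\<lambda>j. c (es ! j) + w (es ! j))" for w :: "'e \<Rightarrow> real"
  obtain qs where qs: "set qs \<subseteq> carrier_vec n" "corthogonal qs" "span (set qs) = span (set (cols A))"
    using orthogonal_spanning_list[of "cols A"] A cols_dim by blast
  have image: "{A *\<^sub>v x | x. x \<in> carrier_vec p} = span (set qs)"
    using image_mult_mat_vec_eq_span[OF A] qs(3) by simp
  have "\<not> set (cols G) \<subseteq> span (set qs)"
    using rank_le_of_cols_in_span[OF A G] rank_lt qs(3) by auto
  then obtain y j0 where y: "y \<in> carrier_vec n" "j0 < N" "\<forall>x\<in>span (set qs). scalar_prod y x = 0"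
    "scalar_prod y (col G j0) \<noteq> 0"
    using exists_normal_vector[OF G qs(1,2)] by blast
  define u where "u j = scalar_prod y (col G j)" for j
  have event_in_hyperplane: "(\<Sum>j<N. u j * (c (es ! j) + w (es ! j))) = 0"
    if "G *\<^sub>v v w \<in> span (set qs)" for w
    using y(3) that scalar_prod_mult_mat_vec[OF y(1) G, of "v w"] by (simp add: u_def v_def)
  have [measurable]: "(\<lambda>w. w (es ! j)) \<in> borel_measurable P" if "j < N" for j
    unfolding P_def by (rule coordinate_borel_measurable[OF \<mu>(2)]) (use es that in auto)
  have image_meas: "(\<lambda>w. (G *\<^sub>v v w) $ k) \<in> borel_measurable P" if "k < n" for k
  proof -
    have "(G *\<^sub>v v w) $ k = (\<Sum>j<N. G $$ (k, j) * (c (es ! j) + w (es ! j)))" for w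
      using G that by (simp add: v_def scalar_prod_def atLeast0LessThan)
    then show ?thesis by simp
  qed
  have event_sets: "{w \<in> space P. G *\<^sub>v v w \<in> span (set qs)} \<in> sets P"
    by (rule span_preimage_measurable[OF qs(1,2) _ image_meas]) (use G in \<open>simp add: v_def\<close>)
  have hyperplane_null: "{w \<in> space P. (\<Sum>j<N. u j * (c (es ! j) + w (es ! j))) = 0} \<in> null_sets P"
    unfolding P_def using affine_hyperplane_null[OF \<mu> es(1,2), of j0 u c] es(3) y(2,4)
    by (simp add: u_def)
  have "{w \<in> space P. G *\<^sub>v v w \<in> span (set qs)} \<in> null_sets P"
    using null_sets_subset[OF hyperplane_null event_sets] event_in_hyperplane by blast
  then show ?thesis unfolding image P_def v_def .
qed

theorem lemma3p4:
  fixes V :: "'v set" and E :: "'v set set" and Q :: "'v set" and k :: nat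
    and c :: "'v set \<Rightarrow> real"
    and m :: nat and Sf :: "nat \<Rightarrow> 'v set" and Wf :: "nat \<Rightarrow> 'v set"
    and es :: "'v set list" and A :: "real mat"
  assumes net: "k_terminal_network V E Q k c"
    and uniq: "\<forall>S. nontrivial_terminal_set Q S \<longrightarrow> unique_min_cut V E Q c S"
    and m_def: "m = 2 ^ (k - 1) - 1"
    and Sf_nontriv: "\<forall>i<m. nontrivial_terminal_set Q (Sf i)"
    and Sf_distinct: "\<forall>i<m. \<forall>j<m. i \<noteq> j \<longrightarrow> Sf j \<noteq> Sf i \<and> Sf j \<noteq> Q - Sf i"
    and Wf_min: "\<forall>i<m. min_separating V E Q c (Sf i) (Wf i)"
    and es: "distinct es" "set es = E"
    and rank_pos: "vec_space.rank m (cutset_matrix E m Wf es) \<ge> 1"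
    and A_carrier: "A \<in> carrier_mat m (vec_space.rank m (cutset_matrix E m Wf es) - 1)"
    and A_01: "\<forall>i<m. \<forall>j<dim_col A. A $$ (i, j) \<in> {0, 1}"
  shows "{w \<in> space (PiM E (\<lambda>_. uniform_measure lborel
                  {0 .. 1 / (Delta V E Q c * real (card E))})).
           Matrix.mult_mat_vec (cutset_matrix E m Wf es) (Matrix.vec (length es) (\<lambda>j. c (es ! j) + w (es ! j)))
             \<in> {Matrix.mult_mat_vec A x | x. x \<in> carrier_vec (dim_col A)}}
         \<in> null_sets (PiM E (\<lambda>_. uniform_measure lborel
                  {0 .. 1 / (Delta V E Q c * real (card E))}))"
proof -
  define A_G where "A_G = cutset_matrix E m Wf es"
  have A_G: "A_G \<in> carrier_mat m (length es)" by (simp add: A_G_def cutset_matrix_def)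
  have "vec_space.rank m A \<le> vec_space.rank m A_G - 1"
    using vec_space.rank_le_nc[OF A_carrier] unfolding A_G_def .
  then have "vec_space.rank m A < vec_space.rank m A_G"
    using rank_pos unfolding A_G_def by linarith
  from column_space_event_null[OF A_G A_carrier this es refl uniform_Icc_atomless]
  show ?thesis using A_carrier unfolding A_G_def by simp
qed

end
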